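(* For every $d<\omega$, the graph $G_d=((2^2)^d,E_d)$, where $E_d=\{\{\sigma,\tau\}\subseteq(2^2)^d:\sigma\neq\tau \text{ and } \{\sigma,\tau\}\text{ is an up-}1\text{-comb}\}$, is a cograph.
   Context: $2^2=\{0,1\}^2$; $(2^2)^d$ is the set of sequences of length $d$ with entries in $2^2$, $(2^2)^{<d}$ those of length $<d$, $\tau^\frown a$ concatenation. For $A,B\subseteq(2^2)^d$, $A$ is narrowly below $B$ if there are $\tau\in(2^2)^{<d}$, $i<2$ with every element of $A$ extending $\tau^\frown(i,0)$ and every element of $B$ extending $\tau^\frown(i,1)$. The up-$1$-combs form the smallest class of finite subsets of $(2^2)^d$ containing singletons and containing $A\cup B$ whenever $A,B$ are in it, $|A|\le1$ and $A$ is narrowly below $B$. For graphs $G_0=(V_0,E_0)$, $G_1=(V_1,E_1)$ on disjoint vertex sets, the coproduct is $(V_0\cup V_1,E_0\cup E_1)$ and the graph join is $(V_0\cup V_1,E_0\cup E_1\cup\{\{a,b\}:a\in V_0,b\in V_1\})$. Cographs form the smallest class of graphs containing the one-vertex graph and closed (up to isomorphism) under coproducts and graph joins. *)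

theory Defs
  imports Main "HOL-Library.Sublist"
begin

text \<open>Elements of 2^2 are pairs of booleans (False = 0, True = 1);
  elements of (2^2)^d are lists of length d.\<close>

type_synonym seq = "(bool \<times> bool) list"

definition seqs :: "nat \<Rightarrow> seq set" where
  "seqs d = {s. length s = d}"

definition narrowly_below :: "nat \<Rightarrow> seq set \<Rightarrow> seq set \<Rightarrow> bool" where
  "narrowly_below d A B \<longleftrightarrow>
     (\<exists>\<tau> i. length \<tau> < d \<and>
        (\<forall>\<sigma>\<in>A. prefix (\<tau> @ [(i, False)]) \<sigma>) \<and>
        (\<forall>\<sigma>\<in>B. prefix (\<tau> @ [(i, True)]) \<sigma>))"

inductive_set up1comb :: "nat \<Rightarrow> seq set set" for d where
  single: "length \<sigma> = d \<Longrightarrow> {\<sigma>} \<in> up1comb d"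
| union: "A \<in> up1comb d \<Longrightarrow> B \<in> up1comb d \<Longrightarrow> card A \<le> 1 \<Longrightarrow>
          narrowly_below d A B \<Longrightarrow> A \<union> B \<in> up1comb d"

type_synonym 'a graph = "'a set \<times> 'a set set"

inductive cograph :: "'a graph \<Rightarrow> bool" where
  vertex: "cograph ({v}, {})"
| coproduct: "cograph (V0, E0) \<Longrightarrow> cograph (V1, E1) \<Longrightarrow> V0 \<inter> V1 = {} \<Longrightarrow>
              cograph (V0 \<union> V1, E0 \<union> E1)"
| join: "cograph (V0, E0) \<Longrightarrow> cograph (V1, E1) \<Longrightarrow> V0 \<inter> V1 = {} \<Longrightarrow>
         cograph (V0 \<union> V1, E0 \<union> E1 \<union> {{a, b} | a b. a \<in> V0 \<and> b \<in> V1})"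
| iso: "cograph (V, E) \<Longrightarrow> bij_betw f V V' \<Longrightarrow> E' = (\<lambda>e. f ` e) ` E \<Longrightarrow>
        cograph (V', E')"

definition comb_graph :: "nat \<Rightarrow> seq graph" where
  "comb_graph d = (seqs d,
     {{\<sigma>, \<tau>} | \<sigma> \<tau>. \<sigma> \<in> seqs d \<and> \<tau> \<in> seqs d \<and> \<sigma> \<noteq> \<tau> \<and> {\<sigma>, \<tau>} \<in> up1comb d})"

end

theory Submission
  imports Defs
begin

(* Two distinct sequences of length d form an up-1-comb exactly when one is narrowly below the
   other, i.e. when at their first difference the two letters agree in the first bit and differ in
   the second. Splitting (2^2)^(d+1) by the first letter (i, b), there are therefore no edges
   between blocks with different i, all edges between the blocks (i, 0) and (i, 1), and a copy of
   G_d inside each block: G_(d+1) is the coproduct over i of the join over b of copies of G_d, and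
   induction on d finishes the proof. *)

fun comb_adj :: "seq \<Rightarrow> seq \<Rightarrow> bool" where
  "comb_adj (c # s) (c' # t) =
     (if c = c' then comb_adj s t else fst c = fst c' \<and> snd c \<noteq> snd c')"
| "comb_adj _ _ = False"

lemma comb_adj_iff:
  "comb_adj \<sigma> \<tau> \<longleftrightarrow> (\<exists>\<rho> i b s t. \<sigma> = \<rho> @ (i, b) # s \<and> \<tau> = \<rho> @ (i, \<not> b) # t)"
proof
  show "comb_adj \<sigma> \<tau> \<Longrightarrow> \<exists>\<rho> i b s t. \<sigma> = \<rho> @ (i, b) # s \<and> \<tau> = \<rho> @ (i, \<not> b) # t"
  proof (induction \<sigma> \<tau> rule: comb_adj.induct)
    case (1 c s c' t)
    show ?case
    proof (cases "c = c'")
      case True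
      with 1 obtain \<rho> i b s' t' where "s = \<rho> @ (i, b) # s'" "t = \<rho> @ (i, \<not> b) # t'"
        by auto
      with True show ?thesis by (intro exI[of _ "c # \<rho>"]) auto
    next
      case False
      with "1.prems" show ?thesis by (intro exI[of _ "[]"]) (cases c; cases c'; auto)
    qed
  qed auto
  show "\<exists>\<rho> i b s t. \<sigma> = \<rho> @ (i, b) # s \<and> \<tau> = \<rho> @ (i, \<not> b) # t \<Longrightarrow> comb_adj \<sigma> \<tau>"
  proof (elim exE conjE)
    fix \<rho> i b s t
    show "\<sigma> = \<rho> @ (i, b) # s \<Longrightarrow> \<tau> = \<rho> @ (i, \<not> b) # t \<Longrightarrow> comb_adj \<sigma> \<tau>"
      by (induction \<rho> arbitrary: \<sigma> \<tau>) auto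
  qed
qed

lemma narrowly_below_singletons_iff:
  assumes "length \<sigma> = d"
  shows "narrowly_below d {\<sigma>} {\<tau>} \<longleftrightarrow>
    (\<exists>\<rho> i s t. \<sigma> = \<rho> @ (i, False) # s \<and> \<tau> = \<rho> @ (i, True) # t)"
proof
  assume "narrowly_below d {\<sigma>} {\<tau>}"
  then obtain \<rho> i where "prefix (\<rho> @ [(i, False)]) \<sigma>" "prefix (\<rho> @ [(i, True)]) \<tau>"
    unfolding narrowly_below_def by blast
  then show "\<exists>\<rho> i s t. \<sigma> = \<rho> @ (i, False) # s \<and> \<tau> = \<rho> @ (i, True) # t"
    by (auto simp: prefix_def)
next
  assume "\<exists>\<rho> i s t. \<sigma> = \<rho> @ (i, False) # s \<and> \<tau> = \<rho> @ (i, True) # t"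
  with assms show "narrowly_below d {\<sigma>} {\<tau>}"
    unfolding narrowly_below_def prefix_def by force
qed

lemma comb_adj_iff_narrowly_below:
  assumes "length \<sigma> = d" "length \<tau> = d"
  shows "comb_adj \<sigma> \<tau> \<longleftrightarrow> narrowly_below d {\<sigma>} {\<tau>} \<or> narrowly_below d {\<tau>} {\<sigma>}"
  unfolding comb_adj_iff narrowly_below_singletons_iff[OF assms(1)]
    narrowly_below_singletons_iff[OF assms(2)]
  by (metis (full_types))

lemma narrowly_below_mono:
  "narrowly_below d A B \<Longrightarrow> A' \<subseteq> A \<Longrightarrow> B' \<subseteq> B \<Longrightarrow> narrowly_below d A' B'"
  unfolding narrowly_below_def by blast

lemma narrowly_below_disjoint: "narrowly_below d A B \<Longrightarrow> A \<inter> B = {}"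
  unfolding narrowly_below_def prefix_def by fastforce

lemma up1comb_nonempty: "A \<in> up1comb d \<Longrightarrow> A \<noteq> {}"
  by (induction rule: up1comb.induct) auto

lemma doubleton_up1comb_iff:
  assumes "length \<sigma> = d" "length \<tau> = d"
  shows "\<sigma> \<noteq> \<tau> \<and> {\<sigma>, \<tau>} \<in> up1comb d \<longleftrightarrow>
    narrowly_below d {\<sigma>} {\<tau>} \<or> narrowly_below d {\<tau>} {\<sigma>}"
proof
  assume "\<sigma> \<noteq> \<tau> \<and> {\<sigma>, \<tau>} \<in> up1comb d"
  then have "\<sigma> \<noteq> \<tau>" "{\<sigma>, \<tau>} \<in> up1comb d" by auto
  from this(2) show "narrowly_below d {\<sigma>} {\<tau>} \<or> narrowly_below d {\<tau>} {\<sigma>}"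
  proof cases
    case (single \<rho>)
    then have "\<sigma> = \<tau>" by (metis insertI1 insert_commute singletonD)
    with \<open>\<sigma> \<noteq> \<tau>\<close> show ?thesis ..
  next
    case (union A B)
    then obtain a b where ab: "a \<in> A" "b \<in> B" using up1comb_nonempty by blast
    then have "narrowly_below d {a} {b}" using narrowly_below_mono[OF union(5)] by simp
    moreover from this have "a \<noteq> b" using narrowly_below_disjoint by blast
    moreover have "a \<in> {\<sigma>, \<tau>}" "b \<in> {\<sigma>, \<tau>}" using ab union(1) by blast+
    ultimately show ?thesis by blast
  qed
next
  assume nb: "narrowly_below d {\<sigma>} {\<tau>} \<or> narrowly_below d {\<tau>} {\<sigma>}"
  have \<sigma>: "{\<sigma>} \<in> up1comb d" and \<tau>: "{\<tau>} \<in> up1comb d"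
    using assms by (auto intro: up1comb.single)
  have "{\<sigma>, \<tau>} \<in> up1comb d"
    using nb up1comb.union[OF \<sigma> \<tau>] up1comb.union[OF \<tau> \<sigma>] by (auto simp: insert_commute)
  moreover have "\<sigma> \<noteq> \<tau>" using nb narrowly_below_disjoint by blast
  ultimately show "\<sigma> \<noteq> \<tau> \<and> {\<sigma>, \<tau>} \<in> up1comb d" by blast
qed

definition comb_adj_edges :: "nat \<Rightarrow> seq set set" where
  "comb_adj_edges d = {{\<sigma>, \<tau>} | \<sigma> \<tau>. \<sigma> \<in> seqs d \<and> \<tau> \<in> seqs d \<and> comb_adj \<sigma> \<tau>}"

lemma comb_adj_edgesI:
  "\<sigma> \<in> seqs d \<Longrightarrow> \<tau> \<in> seqs d \<Longrightarrow> comb_adj \<sigma> \<tau> \<Longrightarrow> {\<sigma>, \<tau>} \<in> comb_adj_edges d"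
  unfolding comb_adj_edges_def by blast

lemma comb_adj_edgesE:
  assumes "e \<in> comb_adj_edges d"
  obtains \<sigma> \<tau> where "e = {\<sigma>, \<tau>}" "\<sigma> \<in> seqs d" "\<tau> \<in> seqs d" "comb_adj \<sigma> \<tau>"
  using assms unfolding comb_adj_edges_def mem_Collect_eq by (elim exE conjE) (rule that)

lemma up1comb_edge_iff_comb_adj:
  assumes "\<sigma> \<in> seqs d" "\<tau> \<in> seqs d"
  shows "\<sigma> \<noteq> \<tau> \<and> {\<sigma>, \<tau>} \<in> up1comb d \<longleftrightarrow> comb_adj \<sigma> \<tau>"
  using assms unfolding seqs_def
  by (simp add: doubleton_up1comb_iff comb_adj_iff_narrowly_below)

lemma comb_graph_eq: "comb_graph d = (seqs d, comb_adj_edges d)"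
  unfolding comb_graph_def comb_adj_edges_def
  by (metis (no_types, lifting) up1comb_edge_iff_comb_adj)

lemma cograph_image:
  fixes f :: "'a \<Rightarrow> 'a"
  assumes "cograph (V, E)" "inj_on f V"
  shows "cograph (f ` V, (`) f ` E)"
  by (rule cograph.iso[OF assms(1) inj_on_imp_bij_betw[OF assms(2)]]) simp

lemma cograph_coproduct_bool:
  assumes "\<And>b. cograph (V b, E b)" "V False \<inter> V True = {}"
  shows "cograph (\<Union>b. V b, \<Union>b. E b)"
  using cograph.coproduct[OF assms(1) assms(1) assms(2)] by (simp add: UN_bool_eq Un_ac)

lemma cograph_join_bool:
  assumes "\<And>b. cograph (V b, E b)" "V False \<inter> V True = {}"
  shows "cograph (\<Union>b. V b, (\<Union>b. E b) \<union> {{x, y} | x y. x \<in> V False \<and> y \<in> V True})"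
  using cograph.join[OF assms(1) assms(1) assms(2)] by (simp add: UN_bool_eq Un_ac)

lemma Cons_in_seqs_Suc [simp]: "c # s \<in> seqs (Suc d) \<longleftrightarrow> s \<in> seqs d"
  unfolding seqs_def by simp

lemma seqs_Suc: "seqs (Suc d) = (\<Union>i b. (#) (i, b) ` seqs d)"
  unfolding seqs_def by (fastforce simp: length_Suc_conv)

lemma comb_adj_edges_Suc:
  "comb_adj_edges (Suc d) =
     (\<Union>i. (\<Union>b. (`) ((#) (i, b)) ` comb_adj_edges d) \<union>
       {{x, y} | x y. x \<in> (#) (i, False) ` seqs d \<and> y \<in> (#) (i, True) ` seqs d})"
  (is "_ = (\<Union>i. ?copies i \<union> ?join i)")
proof (intro equalityI subsetI)
  fix e assume "e \<in> comb_adj_edges (Suc d)"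
  then obtain \<sigma> \<tau> where e: "e = {\<sigma>, \<tau>}" "\<sigma> \<in> seqs (Suc d)" "\<tau> \<in> seqs (Suc d)"
    and adj: "comb_adj \<sigma> \<tau>"
    by (rule comb_adj_edgesE)
  then obtain i b s i' b' t where st: "\<sigma> = (i, b) # s" "\<tau> = (i', b') # t" "s \<in> seqs d" "t \<in> seqs d"
    unfolding seqs_Suc by blast
  show "e \<in> (\<Union>i. ?copies i \<union> ?join i)"
  proof (cases "(i, b) = (i', b')")
    case True
    with adj st have "{s, t} \<in> comb_adj_edges d" by (auto intro: comb_adj_edgesI)
    moreover have "e = (#) (i, b) ` {s, t}" using e st True by simp
    ultimately have "e \<in> ?copies i" by blast
    then show ?thesis by blast
  next
    case False
    with adj st have "i' = i" "b' = (\<not> b)" by auto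
    with e st have "e \<in> ?join i" by (cases b) (auto simp: insert_commute)
    then show ?thesis by blast
  qed
next
  fix e assume "e \<in> (\<Union>i. ?copies i \<union> ?join i)"
  then obtain i where "e \<in> ?copies i \<or> e \<in> ?join i" by blast
  then show "e \<in> comb_adj_edges (Suc d)"
  proof
    assume "e \<in> ?copies i"
    then obtain b s t where "e = {(i, b) # s, (i, b) # t}" "s \<in> seqs d" "t \<in> seqs d" "comb_adj s t"
      by (auto elim: comb_adj_edgesE)
    then show ?thesis by (auto intro: comb_adj_edgesI)
  next
    assume "e \<in> ?join i"
    then obtain s t where "e = {(i, False) # s, (i, True) # t}" "s \<in> seqs d" "t \<in> seqs d"
      by blast
    then show ?thesis by (auto intro: comb_adj_edgesI)
  qed
qed

theorem lemma4p3:
  fixes d :: nat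
  shows "cograph (comb_graph d)"
  unfolding comb_graph_eq
proof (induction d)
  case 0
  have "seqs 0 = {[]}" "comb_adj_edges 0 = {}"
    unfolding seqs_def comb_adj_edges_def by auto
  then show ?case by (simp add: cograph.vertex)
next
  case (Suc d)
  define V where "V c = (#) c ` seqs d" for c
  define E where "E c = (`) ((#) c) ` comb_adj_edges d" for c
  have copy: "cograph (V c, E c)" for c
    unfolding V_def E_def by (rule cograph_image[OF Suc.IH]) simp
  have copies_disjoint: "c \<noteq> c' \<Longrightarrow> V c \<inter> V c' = {}" for c c'
    unfolding V_def by auto
  have "cograph (\<Union>b. V (i, b), (\<Union>b. E (i, b)) \<union> {{x, y} | x y. x \<in> V (i, False) \<and> y \<in> V (i, True)})"
    for i
    using cograph_join_bool[where V = "\<lambda>b. V (i, b)" and E = "\<lambda>b. E (i, b)"]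
      copy copies_disjoint
    by simp
  then have "cograph (\<Union>i b. V (i, b),
      \<Union>i. (\<Union>b. E (i, b)) \<union> {{x, y} | x y. x \<in> V (i, False) \<and> y \<in> V (i, True)})"
    by (rule cograph_coproduct_bool) (auto simp: V_def)
  then show ?case
    unfolding seqs_Suc comb_adj_edges_Suc V_def E_def .
qed

end
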